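(* Let $J,\mathbf{J},\mathbf{S},\mathbf{U},\mathbf{V},\mathbf{K}$ and $\mathbf{\Xi}$ be as in one of the three cases (continuous, semi-discrete, fully discrete) of the NLS solution construction, with $\mathbf{K}$ invertible, and let $\mathbf{\Pi}$ be a constant invertible $n\times n$ matrix with $\mathbf{J}\mathbf{\Pi}=-\mathbf{\Pi}\mathbf{J}$. Define $\mathbf{S}'=-\mathbf{\Pi}\mathbf{S}\mathbf{\Pi}^{-1}$ in the continuous case and $\mathbf{S}'=\mathbf{\Pi}\mathbf{S}^{-1}\mathbf{\Pi}^{-1}$ in the discrete cases, and $\mathbf{U}'=-\mathbf{U}\mathbf{K}^{-1}\mathbf{\Pi}^{-1}$, $\mathbf{V}'=\mathbf{\Pi}\mathbf{K}^{-1}\mathbf{V}$, $\mathbf{K}'=\mathbf{\Pi}\mathbf{K}^{-1}\mathbf{\Pi}^{-1}$. Then $(\mathbf{J},\mathbf{S}',\mathbf{U}',\mathbf{V}',\mathbf{K}')$ satisfy the same commutation relations and the same Sylvester equation as the original data, the associated matrix is $\mathbf{\Xi}'=\mathbf{\Pi}\mathbf{\Xi}^{-1}\mathbf{\Pi}^{-1}$, and the associated functions satisfy $\mathcal{U}'=\mathcal{U}$ and $\mathcal{D}'=\mathcal{D}+\mathbf{U}\mathbf{K}^{-1}\mathbf{V}$ (the latter summand being constant).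
   Context: Setting: $J\in\mathrm{Mat}(m,m,\mathbb{C})$ with $J^2=I_m$; constant complex $\mathbf{J},\mathbf{S},\mathbf{K}$ ($n\times n$), $\mathbf{U}$ ($m\times n$), $\mathbf{V}$ ($n\times m$) with $\mathbf{J}^2=\mathbf{I}$, $\mathbf{J}\mathbf{S}=\mathbf{S}\mathbf{J}$, $J\mathbf{U}=-\mathbf{U}\mathbf{J}$, $\mathbf{J}\mathbf{V}=\mathbf{V}J$, $\mathbf{J}\mathbf{K}=-\mathbf{K}\mathbf{J}$. Sylvester equation: $\mathbf{S}\mathbf{K}+\mathbf{K}\mathbf{S}=\mathbf{V}\mathbf{U}$ (continuous) or $\mathbf{S}^{-1}\mathbf{K}-\mathbf{K}\mathbf{S}=\mathbf{V}\mathbf{U}$ (discrete, $\mathbf{S}$ invertible). $\mathbf{\Xi}=e^{-x\mathbf{S}-\mathrm{i}t\mathbf{S}^2\mathbf{J}}$ (continuous), $\mathbf{\Xi}=\mathbf{S}^xe^{-\mathrm{i}t(\mathbf{S}+\mathbf{S}^{-1}-2\mathbf{I})\mathbf{J}}$ (semi-discrete), $\mathbf{\Xi}=\mathbf{S}^x[(\mathbf{I}+\mathrm{i}\mathbf{J}(\mathbf{I}-\mathbf{S}^{-1}))(\mathbf{I}-\mathrm{i}\mathbf{J}(\mathbf{I}-\mathbf{S}))^{-1}]^t$ (fully discrete). Associated functions: $\mathcal{U}=\mathbf{U}(\mathbf{\Xi}^{-1}-\mathbf{K}\mathbf{\Xi}\mathbf{K})^{-1}\mathbf{V}$, $\mathcal{D}=\mathbf{U}\mathbf{\Xi}\mathbf{K}(\mathbf{\Xi}^{-1}-\mathbf{K}\mathbf{\Xi}\mathbf{K})^{-1}\mathbf{V}$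 (assumed to exist); primed quantities are built the same way from primed data. *)

theory Defs
  imports "HOL-Analysis.Analysis"
begin

primrec mpow :: "complex^'n^'n \<Rightarrow> nat \<Rightarrow> complex^'n^'n" where
  "mpow A 0 = mat 1"
| "mpow A (Suc k) = A ** mpow A k"

definition mpowi :: "complex^'n^'n \<Rightarrow> int \<Rightarrow> complex^'n^'n" where
  "mpowi A k = (if 0 \<le> k then mpow A (nat k) else mpow (matrix_inv A) (nat (- k)))"

definition mexp :: "complex^'n^'n \<Rightarrow> complex^'n^'n" where
  "mexp A = (\<Sum>k. (1 / fact k) *\<^sub>R mpow A k)"

definition csmul :: "complex \<Rightarrow> complex^'c^'r \<Rightarrow> complex^'c^'r" where
  "csmul c A = (\<chi> i j. c * A $ i $ j)"

datatype nls_case = Continuous | SemiDiscrete | FullyDiscrete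

fun admissible :: "nls_case \<Rightarrow> real \<Rightarrow> real \<Rightarrow> bool" where
  "admissible Continuous x t = True"
| "admissible SemiDiscrete x t = (x \<in> \<int>)"
| "admissible FullyDiscrete x t = (x \<in> \<int> \<and> t \<in> \<int>)"

text \<open>Standing invertibility requirements of each case (so that Xi is defined and invertible).\<close>
fun case_ok :: "nls_case \<Rightarrow> complex^'n^'n \<Rightarrow> complex^'n^'n \<Rightarrow> bool" where
  "case_ok Continuous JJ S = True"
| "case_ok SemiDiscrete JJ S = invertible S"
| "case_ok FullyDiscrete JJ S = (invertible S
      \<and> invertible (mat 1 - csmul \<i> (JJ ** (mat 1 - S)))
      \<and> invertible (mat 1 + csmul \<i> (JJ ** (mat 1 - matrix_inv S))))"

fun sylvester :: "nls_case \<Rightarrow> complex^'n^'n \<Rightarrow> complex^'n^'n \<Rightarrow> complex^'n^'m \<Rightarrow> complex^'m^'n \<Rightarrow> bool" where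
  "sylvester Continuous S K U V = (S ** K + K ** S = V ** U)"
| "sylvester SemiDiscrete S K U V = (matrix_inv S ** K - K ** S = V ** U)"
| "sylvester FullyDiscrete S K U V = (matrix_inv S ** K - K ** S = V ** U)"

fun Xi :: "nls_case \<Rightarrow> complex^'n^'n \<Rightarrow> complex^'n^'n \<Rightarrow> real \<Rightarrow> real \<Rightarrow> complex^'n^'n" where
  "Xi Continuous JJ S x t =
     mexp (csmul (- complex_of_real x) S + csmul (- \<i> * complex_of_real t) (S ** S ** JJ))"
| "Xi SemiDiscrete JJ S x t =
     mpowi S \<lfloor>x\<rfloor> ** mexp (csmul (- \<i> * complex_of_real t) ((S + matrix_inv S - mat 2) ** JJ))"
| "Xi FullyDiscrete JJ S x t =
     mpowi S \<lfloor>x\<rfloor> **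
     mpowi ((mat 1 + csmul \<i> (JJ ** (mat 1 - matrix_inv S)))
            ** matrix_inv (mat 1 - csmul \<i> (JJ ** (mat 1 - S)))) \<lfloor>t\<rfloor>"

definition nlsU :: "nls_case \<Rightarrow> complex^'n^'n \<Rightarrow> complex^'n^'n \<Rightarrow> complex^'n^'n
      \<Rightarrow> complex^'n^'m \<Rightarrow> complex^'m^'n \<Rightarrow> real \<Rightarrow> real \<Rightarrow> complex^'m^'m" where
  "nlsU c JJ S K U V x t =
     (let X = Xi c JJ S x t in U ** matrix_inv (matrix_inv X - K ** X ** K) ** V)"

definition nlsD :: "nls_case \<Rightarrow> complex^'n^'n \<Rightarrow> complex^'n^'n \<Rightarrow> complex^'n^'n
      \<Rightarrow> complex^'n^'m \<Rightarrow> complex^'m^'n \<Rightarrow> real \<Rightarrow> real \<Rightarrow> complex^'m^'m" where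
  "nlsD c JJ S K U V x t =
     (let X = Xi c JJ S x t in U ** X ** K ** matrix_inv (matrix_inv X - K ** X ** K) ** V)"

end

theory Submission
  imports Defs
begin

(* Write sim P A = P A P\<inverse>.  The hypothesis JJ \<Pi> = -\<Pi> JJ says exactly that sim \<Pi> JJ = -JJ, and the
   reflected data are S' = -sim \<Pi> S (continuous) or sim \<Pi> S\<inverse> (discrete), K' = sim \<Pi> K\<inverse>,
   U' = -U K\<inverse> \<Pi>\<inverse>, V' = \<Pi> K\<inverse> V.  Since sim \<Pi> is an algebra automorphism, it commutes with
   matrix powers and with the matrix exponential; substituting S' into the exponent or Cayley
   factor defining Xi therefore produces the conjugate of the inverse of the original factor,
   whence Xi' = \<Pi> Xi\<inverse> \<Pi>\<inverse>. *)

lemma matrix_mult_minus_left: "(- A) ** (B::'a::ring_1^'k^'n) = - (A ** B)"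
  by (simp add: matrix_matrix_mult_def vec_eq_iff sum_negf)

lemma matrix_mult_minus_right: "(A::'a::ring_1^'n^'m) ** (- B) = - (A ** B)"
  by (simp add: matrix_matrix_mult_def vec_eq_iff sum_negf)

lemma matrix_add_rdistrib: "(A + B) ** (C::'a::ring_1^'k^'n) = A ** C + B ** C"
  by (simp add: matrix_matrix_mult_def vec_eq_iff sum.distrib algebra_simps)

lemma matrix_diff_rdistrib: "(A - B) ** (C::'a::ring_1^'k^'n) = A ** C - B ** C"
  by (simp add: matrix_matrix_mult_def vec_eq_iff sum_subtractf algebra_simps)

lemma matrix_diff_ldistrib: "(A::'a::ring_1^'n^'m) ** (B - C) = A ** B - A ** C"
  by (simp add: matrix_matrix_mult_def vec_eq_iff sum_subtractf algebra_simps)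

lemma mat_commute: "mat k ** A = A ** (mat k :: 'a::comm_semiring_1^'n^'n)"
  by (simp add: mat_def matrix_matrix_mult_def vec_eq_iff if_distrib if_distribR mult.commute
      cong: if_cong)

lemmas matrix_ring_simps = matrix_mul_assoc matrix_mult_minus_left matrix_mult_minus_right
  matrix_add_ldistrib matrix_add_rdistrib matrix_diff_ldistrib matrix_diff_rdistrib

lemma matrix_inv_right: "invertible (A::'a::field^'n^'n) \<Longrightarrow> A ** matrix_inv A = mat 1"
  unfolding matrix_inv_def invertible_def by (rule someI2_ex) auto

lemma matrix_inv_left: "invertible (A::'a::field^'n^'n) \<Longrightarrow> matrix_inv A ** A = mat 1"
  unfolding matrix_inv_def invertible_def by (rule someI2_ex) auto

lemma matrix_inv_cancel_right: "invertible (A::'a::field^'n^'n) \<Longrightarrow> X ** A ** matrix_inv A = X"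
  by (metis matrix_inv_right matrix_mul_assoc matrix_mul_rid)

lemma matrix_inv_cancel_left: "invertible (A::'a::field^'n^'n) \<Longrightarrow> X ** matrix_inv A ** A = X"
  by (metis matrix_inv_left matrix_mul_assoc matrix_mul_rid)

lemma matrix_inv_unique:
  assumes "(A::'a::field^'n^'n) ** B = mat 1"
  shows "matrix_inv A = B"
proof -
  have "invertible A" using assms invertible_right_inverse by blast
  then have "matrix_inv A = matrix_inv A ** (A ** B)" using assms by simp
  also have "\<dots> = B" using \<open>invertible A\<close> by (simp add: matrix_mul_assoc matrix_inv_left)
  finally show ?thesis .
qed

lemma invertible_mat_1: "invertible (mat 1 :: 'a::field^'n^'n)"
  unfolding invertible_def by (intro exI[of _ "mat 1"]) simp

lemma invertible_matrix_inv: "invertible (A::'a::field^'n^'n) \<Longrightarrow> invertible (matrix_inv A)"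
  using matrix_inv_left invertible_right_inverse by blast

lemma matrix_inv_matrix_inv: "invertible (A::'a::field^'n^'n) \<Longrightarrow> matrix_inv (matrix_inv A) = A"
  by (rule matrix_inv_unique) (rule matrix_inv_left)

lemma matrix_inv_mult:
  "invertible (A::'a::field^'n^'n) \<Longrightarrow> invertible (B::'a^'n^'n) \<Longrightarrow>
   matrix_inv (A ** B) = matrix_inv B ** matrix_inv A"
  by (rule matrix_inv_unique) (simp add: matrix_mul_assoc matrix_inv_cancel_right matrix_inv_right)

lemma commute_matrix_inv:
  "invertible (A::'a::field^'n^'n) \<Longrightarrow> J ** A = A ** J \<Longrightarrow> J ** matrix_inv A = matrix_inv A ** J"
  by (metis matrix_inv_cancel_right matrix_inv_left matrix_mul_assoc matrix_mul_lid)

lemma commute_mult: "S ** A = A ** S \<Longrightarrow> S ** B = B ** S \<Longrightarrow> S ** (A ** B) = (A ** B) ** S"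
  by (metis matrix_mul_assoc)

lemma anticommute_matrix_inv:
  assumes "invertible (A::'a::field^'n^'n)" "J ** A = - (A ** J)"
  shows "J ** matrix_inv A = - (matrix_inv A ** J)"
proof -
  have "matrix_inv A ** J = matrix_inv A ** (J ** A) ** matrix_inv A"
    by (simp add: matrix_mul_assoc matrix_inv_cancel_right[OF assms(1)])
  also have "\<dots> = - (J ** matrix_inv A)"
    using assms by (simp add: matrix_ring_simps matrix_inv_left)
  finally show ?thesis by simp
qed

definition sim :: "'a::field^'n^'n \<Rightarrow> 'a^'n^'n \<Rightarrow> 'a^'n^'n" where
  "sim P A = P ** A ** matrix_inv P"

lemma sim_mult: "invertible P \<Longrightarrow> sim P (A ** B) = sim P A ** sim P B"
  by (simp add: sim_def matrix_mul_assoc matrix_inv_cancel_left)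

lemma sim_add: "sim P (A + B) = sim P A + sim P B"
  by (simp add: sim_def matrix_ring_simps)

lemma sim_diff: "sim P (A - B) = sim P A - sim P B"
  by (simp add: sim_def matrix_ring_simps)

lemma sim_minus: "sim P (- A) = - sim P A"
  by (simp add: sim_def matrix_ring_simps)

lemma sim_mat:
  assumes "invertible P"
  shows "sim P (mat k) = mat k"
proof -
  have "sim P (mat k) = mat k ** (P ** matrix_inv P)"
    by (simp add: sim_def mat_commute matrix_mul_assoc)
  then show ?thesis using assms by (simp add: matrix_inv_right)
qed

lemma invertible_sim: "invertible P \<Longrightarrow> invertible A \<Longrightarrow> invertible (sim P A)"
  by (simp add: sim_def invertible_mult invertible_matrix_inv)

lemma matrix_inv_sim:
  "invertible P \<Longrightarrow> invertible A \<Longrightarrow> matrix_inv (sim P A) = sim P (matrix_inv A)"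
  by (rule matrix_inv_unique) (simp add: sim_mult[symmetric] matrix_inv_right sim_mat)

lemma sim_anticommuting:
  assumes "invertible P" "J ** P = - (P ** J)"
  shows "sim P J = - J"
proof -
  have "P ** J = - (J ** P)" using assms(2) by (simp add: minus_equation_iff)
  then show ?thesis using assms(1) by (simp add: sim_def matrix_ring_simps matrix_inv_cancel_right)
qed

lemma commute_sim:
  assumes "invertible P" "sim P J = - J" "J ** A = A ** J"
  shows "J ** sim P A = sim P A ** J"
proof -
  have "J ** sim P A = - sim P (J ** A)" using assms(1,2) by (simp add: sim_mult matrix_ring_simps)
  also have "\<dots> = sim P A ** J" using assms by (simp add: sim_mult matrix_ring_simps)
  finally show ?thesis .
qed

lemma anticommute_sim:
  assumes "invertible P" "sim P J = - J" "J ** A = - (A ** J)"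
  shows "J ** sim P A = - (sim P A ** J)"
proof -
  have "J ** sim P A = - sim P (J ** A)" using assms(1,2) by (simp add: sim_mult matrix_ring_simps)
  also have "\<dots> = - (sim P A ** J)" using assms by (simp add: sim_mult sim_minus matrix_ring_simps)
  finally show ?thesis .
qed

lemma mpow_add: "mpow A (i + j) = mpow A i ** mpow A j"
  by (induct i) (simp_all add: matrix_mul_assoc)

lemma mpow_commute: "B ** A = A ** B \<Longrightarrow> B ** mpow A k = mpow A k ** B"
  by (induct k) (simp_all, metis matrix_mul_assoc)

lemma mpow_sim: "invertible P \<Longrightarrow> mpow (sim P A) k = sim P (mpow A k)"
  by (induct k) (simp_all add: sim_mat sim_mult)

lemma mpow_minus: "mpow (- A) k = ((-1::real) ^ k) *\<^sub>R mpow A k"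
  by (induct k) (simp_all add: matrix_mult_minus_left matrix_scalar_ac scalar_matrix_assoc)

lemma mpow_invertible: "invertible A \<Longrightarrow> invertible (mpow A k)"
  by (induct k) (simp_all add: invertible_mult invertible_mat_1)

lemma mpow_matrix_inv: "invertible A \<Longrightarrow> mpow (matrix_inv A) k = matrix_inv (mpow A k)"
proof (induct k)
  case 0
  then show ?case by (simp add: matrix_inv_unique)
next
  case (Suc k)
  have "mpow (matrix_inv A) (Suc k) = mpow (matrix_inv A) k ** matrix_inv A"
    using mpow_commute[of "matrix_inv A" "matrix_inv A" k] by simp
  also have "\<dots> = matrix_inv (A ** mpow A k)"
    using Suc by (simp add: matrix_inv_mult mpow_invertible)
  finally show ?case by simp
qed

lemma mpowi_invertible: "invertible A \<Longrightarrow> invertible (mpowi A k)"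
  by (simp add: mpowi_def mpow_invertible invertible_matrix_inv)

lemma mpowi_matrix_inv: "invertible A \<Longrightarrow> mpowi (matrix_inv A) k = matrix_inv (mpowi A k)"
  by (simp add: mpowi_def mpow_matrix_inv matrix_inv_matrix_inv invertible_matrix_inv mpow_invertible)

lemma mpowi_sim:
  "invertible P \<Longrightarrow> invertible A \<Longrightarrow> mpowi (sim P A) k = sim P (mpowi A k)"
  by (simp add: mpowi_def mpow_sim matrix_inv_sim invertible_matrix_inv)

lemma mpowi_commute: "invertible A \<Longrightarrow> B ** A = A ** B \<Longrightarrow> B ** mpowi A k = mpowi A k ** B"
  by (simp add: mpowi_def mpow_commute commute_matrix_inv)

lemma summable_norm_matrix_entry:
  fixes a :: "nat \<Rightarrow> 'a::real_normed_vector^'n^'m"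
  assumes "summable (\<lambda>k. norm (a k))"
  shows "summable (\<lambda>k. norm (a k $ p $ r))"
proof (rule summable_comparison_test'[OF assms])
  fix k
  have "norm (a k $ p $ r) \<le> norm (a k $ p)" by (rule Finite_Cartesian_Product.norm_nth_le)
  also have "\<dots> \<le> norm (a k)" by (rule Finite_Cartesian_Product.norm_nth_le)
  finally show "norm (norm (a k $ p $ r)) \<le> norm (a k)" by simp
qed

lemma suminf_matrix_entry:
  fixes a :: "nat \<Rightarrow> 'a::{real_normed_vector,banach}^'n^'m"
  assumes "summable a"
  shows "(\<Sum>k. a k) $ p $ r = (\<Sum>k. a k $ p $ r)"
proof -
  have "bounded_linear (\<lambda>x::'a^'n^'m. x $ p $ r)"
    using bounded_linear_compose[OF bounded_linear_vec_nth bounded_linear_vec_nth] .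
  from bounded_linear.suminf[OF this assms] show ?thesis by simp
qed

lemma matrix_Cauchy_product_sums:
  fixes a :: "nat \<Rightarrow> 'a::{real_normed_algebra_1,banach}^'n^'m" and b :: "nat \<Rightarrow> 'a^'k^'n"
  assumes a: "summable (\<lambda>k. norm (a k))" and b: "summable (\<lambda>k. norm (b k))"
  shows "(\<lambda>k. \<Sum>i\<le>k. a i ** b (k - i)) sums ((\<Sum>k. a k) ** (\<Sum>k. b k))"
proof -
  have entry: "(\<lambda>k. (\<Sum>i\<le>k. a i ** b (k - i)) $ p $ q) sums (((\<Sum>k. a k) ** (\<Sum>k. b k)) $ p $ q)"
    for p q
  proof -
    have "(\<lambda>k. \<Sum>r\<in>UNIV. \<Sum>i\<le>k. a i $ p $ r * b (k - i) $ r $ q)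
          sums (\<Sum>r\<in>UNIV. (\<Sum>k. a k $ p $ r) * (\<Sum>k. b k $ r $ q))"
      by (intro sums_sum Cauchy_product_sums summable_norm_matrix_entry a b)
    then show ?thesis
      by (simp add: matrix_matrix_mult_def suminf_matrix_entry summable_norm_cancel a b sum.swap[of _ UNIV])
  qed
  show ?thesis
    unfolding sums_def
    by (intro vec_tendstoI) (use entry in \<open>simp add: sums_def\<close>)
qed

lemma matrix_mult_bounded_bilinear:
  "bounded_bilinear ((**) :: complex^'n^'m \<Rightarrow> complex^'k^'n \<Rightarrow> complex^'k^'m)"
proof -
  have "bilinear ((**) :: complex^'n^'m \<Rightarrow> complex^'k^'n \<Rightarrow> complex^'k^'m)"
  proof (unfold bilinear_def, intro conjI allI linearI)
    fix A A' :: "complex^'n^'m" and B B' :: "complex^'k^'n" and r :: real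
    show "A ** (B + B') = A ** B + A ** B'" "(A + A') ** B = A ** B + A' ** B"
      by (simp_all add: matrix_ring_simps)
    show "A ** (r *\<^sub>R B) = r *\<^sub>R (A ** B)" "(r *\<^sub>R A) ** B = r *\<^sub>R (A ** B)"
      by (simp_all add: matrix_scalar_ac scalar_matrix_assoc)
  qed
  then show ?thesis by (simp add: bilinear_conv_bounded_bilinear)
qed

lemma mpow_norm_bound:
  fixes A :: "complex^'n^'n"
  shows "\<exists>M\<ge>0. \<forall>k. norm (mpow A k) \<le> norm (mat 1 :: complex^'n^'n) * M ^ k"
proof -
  obtain C where C: "C > 0"
    "\<And>(X::complex^'n^'n) (Y::complex^'n^'n). norm (X ** Y) \<le> norm X * norm Y * C"
    using bounded_bilinear.pos_bounded[OF matrix_mult_bounded_bilinear] by blast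
  have "norm (mpow A k) \<le> norm (mat 1 :: complex^'n^'n) * (norm A * C) ^ k" for k
  proof (induct k)
    case 0
    then show ?case by simp
  next
    case (Suc k)
    have "norm (mpow A (Suc k)) \<le> norm A * norm (mpow A k) * C" using C(2)[of A "mpow A k"] by simp
    also have "\<dots> \<le> norm A * (norm (mat 1 :: complex^'n^'n) * (norm A * C) ^ k) * C"
      using Suc C by (intro mult_right_mono mult_left_mono) auto
    finally show ?case by (simp add: algebra_simps)
  qed
  then show ?thesis using C by (intro exI[of _ "norm A * C"]) auto
qed

lemma summable_norm_mexp_series:
  fixes A :: "complex^'n^'n"
  shows "summable (\<lambda>k. norm ((1 / fact k) *\<^sub>R mpow A k))"
proof -
  obtain M where M: "M \<ge> 0" "\<And>k. norm (mpow A k) \<le> norm (mat 1 :: complex^'n^'n) * M ^ k"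
    using mpow_norm_bound[of A] by blast
  show ?thesis
  proof (rule summable_comparison_test'[OF summable_mult[OF summable_exp]])
    fix k :: nat
    have "norm ((1 / fact k) *\<^sub>R mpow A k) \<le> (1 / fact k) * (norm (mat 1 :: complex^'n^'n) * M ^ k)"
      using M(2)[of k] by (simp add: divide_right_mono)
    then show "norm (norm ((1 / fact k) *\<^sub>R mpow A k))
        \<le> norm (mat 1 :: complex^'n^'n) * (inverse (fact k) * M ^ k)"
      by (simp add: field_simps)
  qed
qed

lemma mexp_bounded_linear:
  assumes L: "bounded_linear L" and powers: "\<And>k. L (mpow A k) = mpow B k"
  shows "L (mexp A) = mexp B"
  unfolding mexp_def
  by (simp add: bounded_linear.suminf[OF L summable_norm_cancel[OF summable_norm_mexp_series]]
      linear_cmul[OF bounded_linear.linear[OF L]] powers)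

lemma mexp_sim:
  fixes A P :: "complex^'n^'n"
  assumes P: "invertible P"
  shows "mexp (sim P A) = sim P (mexp A)"
proof -
  have "bounded_linear (\<lambda>X::complex^'n^'n. P ** X ** matrix_inv P)"
    using bounded_linear_compose[OF bounded_bilinear.bounded_linear_left[OF matrix_mult_bounded_bilinear]
        bounded_bilinear.bounded_linear_right[OF matrix_mult_bounded_bilinear]] by blast
  then show ?thesis
    unfolding sim_def[of P] by (rule mexp_bounded_linear[symmetric]) (simp add: mpow_sim[OF P, unfolded sim_def])
qed

lemma mexp_commute:
  assumes "B ** A = A ** (B::complex^'n^'n)"
  shows "B ** mexp A = mexp A ** B"
proof -
  have L: "bounded_linear (\<lambda>X::complex^'n^'n. B ** X)" "bounded_linear (\<lambda>X::complex^'n^'n. X ** B)"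
    by (rule bounded_bilinear.bounded_linear_right bounded_bilinear.bounded_linear_left,
        rule matrix_mult_bounded_bilinear)+
  note summable = summable_norm_cancel[OF summable_norm_mexp_series]
  show ?thesis
    unfolding mexp_def
    by (simp add: bounded_linear.suminf[OF L(1) summable] bounded_linear.suminf[OF L(2) summable]
        linear_cmul[OF bounded_linear.linear[OF L(1)]] linear_cmul[OF bounded_linear.linear[OF L(2)]]
        mpow_commute[OF assms])
qed

(* The coefficients of the Cauchy product of the exponential series of -A and A. *)
lemma alternating_inverse_fact_sum:
  "(\<Sum>i\<le>k. (-1::real) ^ i / (fact i * fact (k - i))) = (if k = 0 then 1 else 0)"
proof (cases "k = 0")
  case False
  have "(\<Sum>i\<le>k. (-1::real) ^ i / (fact i * fact (k - i)))
      = (\<Sum>i\<le>k. (-1) ^ i * of_nat (k choose i)) / fact k"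
    by (simp add: sum_divide_distrib binomial_fact)
  then show ?thesis using False choose_alternating_sum[of k] by simp
qed simp

lemma mexp_minus_mult: "mexp (- A) ** mexp A = (mat 1 :: complex^'n^'n)"
proof -
  let ?a = "\<lambda>B k. (1 / fact k) *\<^sub>R mpow B k"
  have Cauchy: "(\<lambda>k. \<Sum>i\<le>k. ?a (- A) i ** ?a A (k - i)) sums (mexp (- A) ** mexp A)"
    unfolding mexp_def
    by (rule matrix_Cauchy_product_sums[OF summable_norm_mexp_series summable_norm_mexp_series])
  have "(\<Sum>i\<le>k. ?a (- A) i ** ?a A (k - i)) = (if k = 0 then mat 1 else 0)" for k
  proof -
    have "(\<Sum>i\<le>k. ?a (- A) i ** ?a A (k - i))
        = (\<Sum>i\<le>k. ((-1::real) ^ i / (fact i * fact (k - i))) *\<^sub>R mpow A k)"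
    proof (rule sum.cong[OF refl])
      fix i assume "i \<in> {..k}"
      then have "mpow A i ** mpow A (k - i) = mpow A k" by (simp add: mpow_add[symmetric])
      then show "?a (- A) i ** ?a A (k - i) = ((-1::real) ^ i / (fact i * fact (k - i))) *\<^sub>R mpow A k"
        by (simp add: mpow_minus matrix_scalar_ac scalar_matrix_assoc[symmetric])
    qed
    then show ?thesis by (simp add: scaleR_sum_left[symmetric] alternating_inverse_fact_sum)
  qed
  moreover have "(\<lambda>k. if k = 0 then mat 1 else (0::complex^'n^'n)) sums mat 1"
    using sums_single[of 0 "\<lambda>_. mat 1 :: complex^'n^'n"] by simp
  ultimately show ?thesis using Cauchy sums_unique2 by simp
qed

lemma mexp_invertible: "invertible (mexp (A::complex^'n^'n))"
  using mexp_minus_mult invertible_left_inverse by blast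

lemma matrix_inv_mexp: "matrix_inv (mexp (A::complex^'n^'n)) = mexp (- A)"
  by (rule matrix_inv_unique) (rule matrix_left_right_inverse[THEN iffD2, OF mexp_minus_mult])

lemma csmul_left: "csmul c A ** (B::complex^'k^'n) = csmul c (A ** B)"
  by (simp add: csmul_def matrix_matrix_mult_def vec_eq_iff sum_distrib_left mult.assoc)

lemma csmul_right: "(A::complex^'n^'m) ** csmul c B = csmul c (A ** B)"
  by (simp add: csmul_def matrix_matrix_mult_def vec_eq_iff sum_distrib_left algebra_simps)

lemma csmul_add: "csmul c (A + B) = csmul c A + csmul c B"
  by (simp add: csmul_def vec_eq_iff algebra_simps)

lemma csmul_diff: "csmul c (A - B) = csmul c A - csmul c B"
  by (simp add: csmul_def vec_eq_iff algebra_simps)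

lemma csmul_minus: "csmul c (- A) = - csmul c A"
  by (simp add: csmul_def vec_eq_iff)

lemma sim_csmul: "sim P (csmul c A) = csmul c (sim P A)"
  by (simp add: sim_def csmul_left csmul_right)

lemmas csmul_simps = csmul_left csmul_right csmul_add csmul_diff csmul_minus

lemma sim_inv_product:
  assumes "invertible P" "invertible M" "invertible N" "M ** N = N ** M"
  shows "sim P (matrix_inv M) ** sim P (matrix_inv N) = sim P (matrix_inv (M ** N))"
  using assms by (simp add: sim_mult[symmetric] matrix_inv_mult)

lemma case_ok_invertible: "c \<noteq> Continuous \<Longrightarrow> case_ok c JJ S \<Longrightarrow> invertible S"
  by (cases c) auto

lemma Xi_invertible: "case_ok c JJ S \<Longrightarrow> invertible (Xi c JJ S x t)"
  by (cases c) (auto simp: mexp_invertible mpowi_invertible invertible_mult invertible_matrix_inv)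

(* Continuous case: replacing S by -\<Pi>S\<Pi>\<inverse> negates the exponent up to conjugation by \<Pi>
   (the factor J is negated by conjugation), so the exponential gets inverted. *)
lemma Xi_continuous_reflected:
  assumes P: "invertible P" and JJ: "sim P JJ = - JJ"
  shows "Xi Continuous JJ (- sim P S) x t = sim P (matrix_inv (Xi Continuous JJ S x t))"
proof -
  define B where "B = csmul (- complex_of_real x) S + csmul (- \<i> * complex_of_real t) (S ** S ** JJ)"
  have "csmul (- complex_of_real x) (- sim P S)
          + csmul (- \<i> * complex_of_real t) ((- sim P S) ** (- sim P S) ** JJ)
        = sim P (- B)"
    using P by (simp add: B_def sim_mult sim_add sim_diff sim_minus sim_csmul JJ csmul_simps
        matrix_ring_simps)
  then have "Xi Continuous JJ (- sim P S) x t = mexp (sim P (- B))" by simp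
  also have "\<dots> = sim P (matrix_inv (mexp B))" using P by (simp add: mexp_sim matrix_inv_mexp)
  finally show ?thesis by (simp add: B_def)
qed

(* Semi-discrete case: S' = \<Pi>S\<inverse>\<Pi>\<inverse> inverts both the power S^x and the exponential factor,
   and the two factors commute, so their product is inverted. *)
lemma Xi_semidiscrete_reflected:
  assumes P: "invertible P" and JJ: "sim P JJ = - JJ"
    and S: "invertible S" and JS: "JJ ** S = S ** JJ"
  shows "Xi SemiDiscrete JJ (sim P (matrix_inv S)) x t = sim P (matrix_inv (Xi SemiDiscrete JJ S x t))"
proof -
  define M where "M = mpowi S \<lfloor>x\<rfloor>"
  define B where "B = csmul (- \<i> * complex_of_real t) ((S + matrix_inv S - mat 2) ** JJ)"
  have "csmul (- \<i> * complex_of_real t)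
          ((sim P (matrix_inv S) + matrix_inv (sim P (matrix_inv S)) - mat 2) ** JJ)
        = sim P (- B)"
    using P S by (simp add: B_def matrix_inv_sim invertible_matrix_inv matrix_inv_matrix_inv
        sim_mult sim_add sim_diff sim_minus sim_csmul sim_mat JJ csmul_simps matrix_ring_simps)
  moreover have "mpowi (sim P (matrix_inv S)) \<lfloor>x\<rfloor> = sim P (matrix_inv M)"
    using P S by (simp add: M_def mpowi_sim mpowi_matrix_inv invertible_matrix_inv)
  ultimately have "Xi SemiDiscrete JJ (sim P (matrix_inv S)) x t
      = sim P (matrix_inv M) ** sim P (matrix_inv (mexp B))"
    using P by (simp add: mexp_sim matrix_inv_mexp)
  also have "\<dots> = sim P (matrix_inv (M ** mexp B))"
  proof (rule sim_inv_product[OF P])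
    have "S ** (S + matrix_inv S - mat 2) = (S + matrix_inv S - mat 2) ** S"
      using S by (simp add: matrix_ring_simps matrix_inv_left matrix_inv_right mat_commute)
    then have "S ** B = B ** S"
      unfolding B_def by (simp add: csmul_left csmul_right commute_mult JS[symmetric])
    then have "B ** M = M ** B"
      unfolding M_def by (intro mpowi_commute[OF S]) simp
    then show "M ** mexp B = mexp B ** M" by (intro mexp_commute) simp
  qed (use S in \<open>simp_all add: M_def mpowi_invertible mexp_invertible\<close>)
  finally show ?thesis by (simp add: M_def B_def)
qed

(* Fully discrete case: the reflection swaps the two Cayley factors I - iJ(I - S) and
   I + iJ(I - S\<inverse>) up to conjugation, so the Cayley transform gets inverted. *)
lemma Cayley_factors_reflected:
  assumes P: "invertible P" and JJ: "sim P JJ = - JJ" and S: "invertible S"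
  shows "mat 1 - csmul \<i> (JJ ** (mat 1 - sim P (matrix_inv S)))
           = sim P (mat 1 + csmul \<i> (JJ ** (mat 1 - matrix_inv S)))"
    and "mat 1 + csmul \<i> (JJ ** (mat 1 - matrix_inv (sim P (matrix_inv S))))
           = sim P (mat 1 - csmul \<i> (JJ ** (mat 1 - S)))"
  using P S by (simp_all add: matrix_inv_sim invertible_matrix_inv matrix_inv_matrix_inv
      sim_mult sim_add sim_diff sim_csmul sim_mat JJ csmul_simps matrix_ring_simps)

lemma Xi_fullydiscrete_reflected:
  fixes JJ S P :: "complex^'n^'n"
  assumes P: "invertible P" and JJ: "sim P JJ = - JJ"
    and ok: "case_ok FullyDiscrete JJ S" and JS: "JJ ** S = S ** JJ"
  shows "Xi FullyDiscrete JJ (sim P (matrix_inv S)) x t = sim P (matrix_inv (Xi FullyDiscrete JJ S x t))"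
proof -
  define A where "A = mat 1 - csmul \<i> (JJ ** (mat 1 - S))"
  define B where "B = mat 1 + csmul \<i> (JJ ** (mat 1 - matrix_inv S))"
  define R where "R = B ** matrix_inv A"
  define M where "M = mpowi S \<lfloor>x\<rfloor>"
  define N where "N = mpowi R \<lfloor>t\<rfloor>"
  have S: "invertible S" and A: "invertible A" and B: "invertible B"
    using ok by (simp_all add: A_def B_def)
  have R: "invertible R"
    unfolding R_def using A B by (simp add: invertible_mult invertible_matrix_inv)
  have "(mat 1 + csmul \<i> (JJ ** (mat 1 - matrix_inv (sim P (matrix_inv S)))))
          ** matrix_inv (mat 1 - csmul \<i> (JJ ** (mat 1 - sim P (matrix_inv S))))
        = sim P (A ** matrix_inv B)"
    using P B by (simp add: Cayley_factors_reflected[OF P JJ S] A_def[symmetric] B_def[symmetric]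
        matrix_inv_sim sim_mult)
  also have "A ** matrix_inv B = matrix_inv R"
    unfolding R_def using A B by (simp add: matrix_inv_mult invertible_matrix_inv matrix_inv_matrix_inv)
  finally have "Xi FullyDiscrete JJ (sim P (matrix_inv S)) x t
      = mpowi (sim P (matrix_inv S)) \<lfloor>x\<rfloor> ** mpowi (sim P (matrix_inv R)) \<lfloor>t\<rfloor>"
    by simp
  also have "\<dots> = sim P (matrix_inv M) ** sim P (matrix_inv N)"
    using P S R by (simp add: M_def N_def mpowi_sim mpowi_matrix_inv invertible_matrix_inv)
  also have "\<dots> = sim P (matrix_inv (M ** N))"
  proof (rule sim_inv_product[OF P])
    have JS': "X ** JJ ** S = X ** S ** JJ" for X :: "complex^'n^'n"
      by (simp add: matrix_mul_assoc[symmetric] JS)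
    have "S ** A = A ** S" unfolding A_def by (simp add: csmul_simps matrix_ring_simps JS JS')
    moreover have "S ** B = B ** S"
      unfolding B_def using S
      by (simp add: csmul_simps matrix_ring_simps JS JS' commute_matrix_inv[OF S JS]
          matrix_inv_right matrix_inv_left matrix_inv_cancel_right matrix_inv_cancel_left)
    ultimately have "S ** R = R ** S"
      unfolding R_def using commute_mult commute_matrix_inv[OF A] by blast
    then have "R ** M = M ** R" unfolding M_def by (intro mpowi_commute[OF S]) simp
    then show "M ** N = N ** M" unfolding N_def by (intro mpowi_commute[OF R]) simp
  qed (use S R in \<open>simp_all add: M_def N_def mpowi_invertible\<close>)
  finally show ?thesis by (simp add: M_def N_def R_def A_def B_def)
qed

definition reflected_S :: "nls_case \<Rightarrow> complex^'n^'n \<Rightarrow> complex^'n^'n \<Rightarrow> complex^'n^'n" where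
  "reflected_S c P S = (if c = Continuous then - sim P S else sim P (matrix_inv S))"

lemma reflected_S_commute:
  assumes P: "invertible P" and JJ: "sim P JJ = - JJ" and JS: "JJ ** S = S ** JJ"
    and ok: "case_ok c JJ S"
  shows "JJ ** reflected_S c P S = reflected_S c P S ** JJ"
proof (cases "c = Continuous")
  case True
  then show ?thesis
    using commute_sim[OF P JJ JS] by (simp add: reflected_S_def matrix_ring_simps)
next
  case False
  then have "invertible S" using ok by (rule case_ok_invertible)
  then show ?thesis
    using False commute_sim[OF P JJ commute_matrix_inv[OF _ JS]] by (simp add: reflected_S_def)
qed

lemma case_ok_reflected:
  assumes P: "invertible P" and JJ: "sim P JJ = - JJ" and ok: "case_ok c JJ S"
  shows "case_ok c JJ (reflected_S c P S)"
proof (cases c)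
  case Continuous
  then show ?thesis by simp
next
  case SemiDiscrete
  then show ?thesis using P ok by (simp add: reflected_S_def invertible_sim invertible_matrix_inv)
next
  case FullyDiscrete
  then have S: "invertible S" using ok by simp
  show ?thesis
    using FullyDiscrete P S ok
    by (simp add: reflected_S_def invertible_sim invertible_matrix_inv Cayley_factors_reflected[OF P JJ S])
qed

lemma sylvester_reflected:
  assumes K: "invertible K" and P: "invertible P" and ok: "case_ok c JJ S"
    and syl: "sylvester c S K U V"
  shows "sylvester c (reflected_S c P S) (sim P (matrix_inv K))
           (- (U ** matrix_inv K ** matrix_inv P)) (P ** matrix_inv K ** V)"
proof -
  note cancel = matrix_inv_right matrix_inv_left matrix_inv_cancel_right matrix_inv_cancel_left
  have VU: "(P ** matrix_inv K ** V) ** (- (U ** matrix_inv K ** matrix_inv P))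
      = - sim P (matrix_inv K ** (V ** U) ** matrix_inv K)"
    by (simp add: sim_def matrix_ring_simps)
  show ?thesis
  proof (cases "c = Continuous")
    case True
    then have "V ** U = S ** K + K ** S" using syl by simp
    then have "matrix_inv K ** (V ** U) ** matrix_inv K = matrix_inv K ** S + S ** matrix_inv K"
      using K by (simp add: matrix_ring_simps cancel)
    then show ?thesis
      using True P VU by (simp add: reflected_S_def sim_mult sim_add sim_minus matrix_ring_simps)
  next
    case False
    then have S: "invertible S" using ok by (rule case_ok_invertible)
    have "V ** U = matrix_inv S ** K - K ** S" using False syl by (cases c) simp_all
    then have "matrix_inv K ** (V ** U) ** matrix_inv K = matrix_inv K ** matrix_inv S - S ** matrix_inv K"
      using K by (simp add: matrix_ring_simps cancel)
    then show ?thesis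
      using False P S VU
      by (cases c) (simp_all add: reflected_S_def matrix_inv_sim invertible_matrix_inv
          matrix_inv_matrix_inv sim_mult sim_diff matrix_ring_simps)
  qed
qed

lemma Xi_reflected:
  assumes P: "invertible P" and JJ: "sim P JJ = - JJ" and JS: "JJ ** S = S ** JJ"
    and ok: "case_ok c JJ S"
  shows "Xi c JJ (reflected_S c P S) x t = sim P (matrix_inv (Xi c JJ S x t))"
  using ok Xi_continuous_reflected[OF P JJ] Xi_semidiscrete_reflected[OF P JJ _ JS]
    Xi_fullydiscrete_reflected[OF P JJ _ JS]
  by (cases c) (simp_all add: reflected_S_def)

(* Purely algebraic core: with \<Xi>' = \<Pi>\<Xi>\<inverse>\<Pi>\<inverse> and K' = \<Pi>K\<inverse>\<Pi>\<inverse> one has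
   \<Xi>'\<inverse> - K'\<Xi>'K' = -\<Pi>K\<inverse>(\<Xi>\<inverse> - K\<Xi>K)K\<inverse>\<Pi>\<inverse>, which yields U' = U and D' = D + UK\<inverse>V. *)
lemma reflected_potentials:
  fixes X K P :: "complex^'n^'n" and U :: "complex^'n^'m" and V :: "complex^'m^'n"
  assumes X: "invertible X" and K: "invertible K" and P: "invertible P"
    and Minv: "invertible (matrix_inv X - K ** X ** K)"
  defines "X' \<equiv> sim P (matrix_inv X)" and "K' \<equiv> sim P (matrix_inv K)"
    and "U' \<equiv> - (U ** matrix_inv K ** matrix_inv P)" and "V' \<equiv> P ** matrix_inv K ** V"
  shows "U' ** matrix_inv (matrix_inv X' - K' ** X' ** K') ** V'
           = U ** matrix_inv (matrix_inv X - K ** X ** K) ** V"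
    and "U' ** X' ** K' ** matrix_inv (matrix_inv X' - K' ** X' ** K') ** V'
           = U ** X ** K ** matrix_inv (matrix_inv X - K ** X ** K) ** V + U ** matrix_inv K ** V"
proof -
  define M where "M = matrix_inv X - K ** X ** K"
  note cancel = matrix_inv_right matrix_inv_left matrix_inv_cancel_right matrix_inv_cancel_left
  have "matrix_inv X' - K' ** X' ** K' = - sim P (matrix_inv K ** M ** matrix_inv K)"
    using X K P by (simp add: X'_def K'_def M_def matrix_inv_sim invertible_matrix_inv
        matrix_inv_matrix_inv sim_mult sim_diff matrix_ring_simps cancel)
  also have "matrix_inv \<dots> = - sim P (K ** matrix_inv M ** K)"
    by (rule matrix_inv_unique)
      (use P K Minv in \<open>simp add: M_def[symmetric] sim_mult[symmetric] sim_mat matrix_ring_simps cancel\<close>)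
  finally have inverse: "matrix_inv (matrix_inv X' - K' ** X' ** K') = - sim P (K ** matrix_inv M ** K)" .
  show "U' ** matrix_inv (matrix_inv X' - K' ** X' ** K') ** V' = U ** matrix_inv M ** V"
    unfolding inverse using K P by (simp add: U'_def V'_def sim_def matrix_ring_simps cancel)
  have "U' ** X' ** K' ** matrix_inv (matrix_inv X' - K' ** X' ** K') ** V'
      = U ** matrix_inv K ** matrix_inv X ** matrix_inv M ** V"
    unfolding inverse using K P
    by (simp add: U'_def V'_def X'_def K'_def sim_def matrix_ring_simps cancel)
  also have "\<dots> = U ** matrix_inv K ** (M + K ** X ** K) ** matrix_inv M ** V"
    by (simp add: M_def)
  also have "\<dots> = U ** X ** K ** matrix_inv M ** V + U ** matrix_inv K ** V"
    using K Minv by (simp add: matrix_ring_simps cancel M_def[symmetric])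
  finally show "U' ** X' ** K' ** matrix_inv (matrix_inv X' - K' ** X' ** K') ** V'
      = U ** X ** K ** matrix_inv M ** V + U ** matrix_inv K ** V" .
qed

(* Turns an equation A B = C into a rewrite rule that fires under right-associated products. *)
lemma matrix_mul_assoc_rewrite: "A ** B = C \<Longrightarrow> A ** (B ** Y) = C ** Y"
  by (simp add: matrix_mul_assoc)

lemma reflected_U_V_commute:
  fixes J :: "complex^'m^'m" and JJ K P :: "complex^'n^'n"
    and U :: "complex^'n^'m" and V :: "complex^'m^'n"
  assumes K: "invertible K" and P: "invertible P" and JP: "JJ ** P = - (P ** JJ)"
    and JU: "J ** U = - (U ** JJ)" and JV: "JJ ** V = V ** J" and JK: "JJ ** K = - (K ** JJ)"
  shows "J ** (- (U ** matrix_inv K ** matrix_inv P)) = - ((- (U ** matrix_inv K ** matrix_inv P)) ** JJ)"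
    and "JJ ** (P ** matrix_inv K ** V) = (P ** matrix_inv K ** V) ** J"
proof -
  note JKi = anticommute_matrix_inv[OF K JK] and JPi = anticommute_matrix_inv[OF P JP]
  note swap = JU JV JP JKi JPi matrix_mul_assoc_rewrite[OF JU] matrix_mul_assoc_rewrite[OF JV]
    matrix_mul_assoc_rewrite[OF JP] matrix_mul_assoc_rewrite[OF JKi] matrix_mul_assoc_rewrite[OF JPi]
  show "J ** (- (U ** matrix_inv K ** matrix_inv P)) = - ((- (U ** matrix_inv K ** matrix_inv P)) ** JJ)"
    and "JJ ** (P ** matrix_inv K ** V) = (P ** matrix_inv K ** V) ** J"
    by (simp_all add: matrix_mul_assoc[symmetric] matrix_mult_minus_left matrix_mult_minus_right swap)
qed

theorem mainTheorem4:
  fixes c :: nls_case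
    and J :: "complex^'m^'m"
    and JJ S K Pi :: "complex^'n^'n"
    and U :: "complex^'n^'m"
    and V :: "complex^'m^'n"
  assumes J2: "J ** J = mat 1"
    and JJ2: "JJ ** JJ = mat 1"
    and JS: "JJ ** S = S ** JJ"
    and JU: "J ** U = - (U ** JJ)"
    and JV: "JJ ** V = V ** J"
    and JK: "JJ ** K = - (K ** JJ)"
    and syl: "sylvester c S K U V"
    and ok: "case_ok c JJ S"
    and Kinv: "invertible K"
    and Piinv: "invertible Pi"
    and JPi: "JJ ** Pi = - (Pi ** JJ)"
  defines "S' \<equiv> (if c = Continuous then - (Pi ** S ** matrix_inv Pi)
                 else Pi ** matrix_inv S ** matrix_inv Pi)"
    and "U' \<equiv> - (U ** matrix_inv K ** matrix_inv Pi)"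
    and "V' \<equiv> Pi ** matrix_inv K ** V"
    and "K' \<equiv> Pi ** matrix_inv K ** matrix_inv Pi"
  shows "JJ ** S' = S' ** JJ \<and> J ** U' = - (U' ** JJ) \<and> JJ ** V' = V' ** J
         \<and> JJ ** K' = - (K' ** JJ)
         \<and> sylvester c S' K' U' V' \<and> case_ok c JJ S'
         \<and> (\<forall>x t. admissible c x t \<longrightarrow>
               Xi c JJ S' x t = Pi ** matrix_inv (Xi c JJ S x t) ** matrix_inv Pi)
         \<and> (\<forall>x t. admissible c x t
               \<and> invertible (matrix_inv (Xi c JJ S x t) - K ** Xi c JJ S x t ** K) \<longrightarrow>
               nlsU c JJ S' K' U' V' x t = nlsU c JJ S K U V x t
             \<and> nlsD c JJ S' K' U' V' x t = nlsD c JJ S K U V x t + U ** matrix_inv K ** V)"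
proof -
  have JJ: "sim Pi JJ = - JJ" by (rule sim_anticommuting[OF Piinv JPi])
  have S': "S' = reflected_S c Pi S" and K': "K' = sim Pi (matrix_inv K)"
    by (simp_all add: S'_def K'_def reflected_S_def sim_def)
  have Xi': "Xi c JJ S' x t = sim Pi (matrix_inv (Xi c JJ S x t))" for x t
    unfolding S' by (rule Xi_reflected[OF Piinv JJ JS ok])
  have potentials: "nlsU c JJ S' K' U' V' x t = nlsU c JJ S K U V x t
      \<and> nlsD c JJ S' K' U' V' x t = nlsD c JJ S K U V x t + U ** matrix_inv K ** V"
    if "invertible (matrix_inv (Xi c JJ S x t) - K ** Xi c JJ S x t ** K)" for x t
    using reflected_potentials[OF Xi_invertible[OF ok] Kinv Piinv that, of U V]
    by (simp add: nlsU_def nlsD_def Let_def Xi' K' U'_def V'_def)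
  show ?thesis
    using reflected_S_commute[OF Piinv JJ JS ok] reflected_U_V_commute[OF Kinv Piinv JPi JU JV JK]
      anticommute_sim[OF Piinv JJ anticommute_matrix_inv[OF Kinv JK]]
      sylvester_reflected[OF Kinv Piinv ok syl] case_ok_reflected[OF Piinv JJ ok] Xi' potentials
    by (simp add: S' K' U'_def V'_def sim_def)
qed

end
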